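(* For every finite set $\Omega$ with $|\Omega|\ge2$, every $0<\varepsilon<1/2$ and every integer $k\ge2$ there exists $n_0>0$ such that for all $n>n_0$ and all $\mu\in\mathcal P(\Omega^n)$: (i) if $\mu$ is $(\varepsilon/9)^3$-symmetric, then $D_\square(\mu,\bigotimes_{i=1}^n\mu_i)<\varepsilon$; (ii) if $D_\square(\mu,\bigotimes_{i=1}^n\mu_i)<\varepsilon^4/(128|\Omega|)^{4k}$, then $\sum_{1\le i_1<\dots<i_k\le n}\|\mu_{i_1,\dots,i_k}-\mu_{i_1}\otimes\dots\otimes\mu_{i_k}\|_{TV}<\varepsilon n^k$.
   Context: $\mathcal P(\mathcal X)$ denotes the set of probability measures on a finite set $\mathcal X$; $[n]=\{1,\dots,n\}$; $\|p-q\|_{TV}=\frac12\sum_x|p(x)-q(x)|$. For $\mu\in\mathcal P(\Omega^n)$ and $I\subset[n]$, $\mu_I$ is the joint marginal of the coordinates in $I$ (written $\mu_{i_1,\dots,i_k}$ for $I=\{i_1,\dots,i_k\}$, and $\mu_i$ for one coordinate). $\mu\in\mathcal P(\Omega^V)$ is $\varepsilon$-symmetric if $\frac1{|V|^2}\sum_{i,j\in V,\,i\ne j}\|\mu_{i,j}-\mu_i\otimes\mu_j\|_{TV}<\varepsilon$. For $\mu,\nu\in\mathcal P(\Omega^n)$ let $\Gamma(\mu,\nu)$ be the set of couplings, i.e. probability measures $\gamma$ on $\Omega^n\times\Omega^n$ whose first and second marginals are $\mu$ and $\nu$. The cut metric is $D_\square(\mu,\nu)=\frac1n\min_{\gamma\in\Gamma(\mu,\nu)}\max_{I\subset[n],\,B\subset\Omega^n\times\Omega^n,\,\omega\in\Omega}\Big|\sum_{i\in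 I}\sum_{(\sigma,\tau)\in B}\gamma(\sigma,\tau)\big(\mathbf 1\{\sigma_i=\omega\}-\mathbf 1\{\tau_i=\omega\}\big)\Big|$. *)

theory Defs
  imports Complex_Main "HOL-Library.FuncSet"
begin

text \<open>Configurations in \<Omega>^n, with \<Omega> = UNIV of a finite type and coordinates [n] = {1..n},
  represented as extensional functions on {1..n}.\<close>
definition cfgs :: "nat \<Rightarrow> (nat \<Rightarrow> 'a) set" where
  "cfgs n = PiE {1..n} (\<lambda>_. UNIV)"

definition is_prob :: "nat \<Rightarrow> ((nat \<Rightarrow> 'a) \<Rightarrow> real) \<Rightarrow> bool" where
  "is_prob n \<mu> \<longleftrightarrow> (\<forall>\<sigma>. 0 \<le> \<mu> \<sigma>) \<and> (\<forall>\<sigma>. \<sigma> \<notin> cfgs n \<longrightarrow> \<mu> \<sigma> = 0)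
     \<and> sum \<mu> (cfgs n) = 1"

definition marg :: "nat \<Rightarrow> ((nat \<Rightarrow> 'a) \<Rightarrow> real) \<Rightarrow> nat set \<Rightarrow> (nat \<Rightarrow> 'a) \<Rightarrow> real" where
  "marg n \<mu> I \<tau> = (\<Sum>\<sigma>\<in>cfgs n. if restrict \<sigma> I = \<tau> then \<mu> \<sigma> else 0)"

definition marg1 :: "nat \<Rightarrow> ((nat \<Rightarrow> 'a) \<Rightarrow> real) \<Rightarrow> nat \<Rightarrow> 'a \<Rightarrow> real" where
  "marg1 n \<mu> i \<omega> = (\<Sum>\<sigma>\<in>cfgs n. if \<sigma> i = \<omega> then \<mu> \<sigma> else 0)"

definition tv_marg :: "nat \<Rightarrow> ((nat \<Rightarrow> 'a) \<Rightarrow> real) \<Rightarrow> nat set \<Rightarrow> real" where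
  "tv_marg n \<mu> I = (1/2) * (\<Sum>\<tau>\<in>PiE I (\<lambda>_. UNIV).
      \<bar>marg n \<mu> I \<tau> - (\<Prod>i\<in>I. marg1 n \<mu> i (\<tau> i))\<bar>)"

definition eps_symmetric :: "nat \<Rightarrow> real \<Rightarrow> ((nat \<Rightarrow> 'a) \<Rightarrow> real) \<Rightarrow> bool" where
  "eps_symmetric n \<epsilon> \<mu> \<longleftrightarrow>
     (1 / (real n)^2) * (\<Sum>i\<in>{1..n}. \<Sum>j\<in>{1..n}-{i}. tv_marg n \<mu> {i, j}) < \<epsilon>"

definition prod_marg :: "nat \<Rightarrow> ((nat \<Rightarrow> 'a) \<Rightarrow> real) \<Rightarrow> (nat \<Rightarrow> 'a) \<Rightarrow> real" where
  "prod_marg n \<mu> \<sigma> = (if \<sigma> \<in> cfgs n then (\<Prod>i\<in>{1..n}. marg1 n \<mu> i (\<sigma> i)) else 0)"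

definition couplings :: "nat \<Rightarrow> ((nat \<Rightarrow> 'a) \<Rightarrow> real) \<Rightarrow> ((nat \<Rightarrow> 'a) \<Rightarrow> real)
     \<Rightarrow> ((nat \<Rightarrow> 'a) \<times> (nat \<Rightarrow> 'a) \<Rightarrow> real) set" where
  "couplings n \<mu> \<nu> = {\<gamma>. (\<forall>p. 0 \<le> \<gamma> p) \<and> (\<forall>p. p \<notin> cfgs n \<times> cfgs n \<longrightarrow> \<gamma> p = 0)
      \<and> (\<forall>\<sigma>\<in>cfgs n. (\<Sum>\<tau>\<in>cfgs n. \<gamma> (\<sigma>, \<tau>)) = \<mu> \<sigma>)
      \<and> (\<forall>\<tau>\<in>cfgs n. (\<Sum>\<sigma>\<in>cfgs n. \<gamma> (\<sigma>, \<tau>)) = \<nu> \<tau>)}"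

definition cut_val :: "nat \<Rightarrow> ((nat \<Rightarrow> 'a::finite) \<times> (nat \<Rightarrow> 'a) \<Rightarrow> real) \<Rightarrow> real" where
  "cut_val n \<gamma> = Max {\<bar>\<Sum>i\<in>I. \<Sum>p\<in>B. \<gamma> p *
        ((if fst p i = \<omega> then 1 else 0) - (if snd p i = \<omega> then 1 else 0))\<bar>
      | I B \<omega>. I \<subseteq> {1..n} \<and> B \<subseteq> cfgs n \<times> cfgs n}"

text \<open>Cut metric; the minimum over couplings is attained (compactness), so it equals the infimum.\<close>
definition cut_dist :: "nat \<Rightarrow> ((nat \<Rightarrow> 'a::finite) \<Rightarrow> real) \<Rightarrow> ((nat \<Rightarrow> 'a) \<Rightarrow> real) \<Rightarrow> real" where
  "cut_dist n \<mu> \<nu> = (1 / real n) * Inf (cut_val n ` couplings n \<mu> \<nu>)"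

end

theory Submission
  imports Defs
begin

(* Part (i): couple mu independently with the product nu of its marginals. For a colour omega
  and a set I of coordinates, the cut functional of this coupling is at most
  E |X(sigma) - X(tau)| <= sqrt (E (X(sigma) - X(tau))^2), where X counts the coordinates in I
  that take the value omega. The second moment expands into one- and two-coordinate marginals:
  the diagonal contributes O(n), and each off-diagonal term is bounded by the total variation
  distance between mu_{i,j} and mu_i (x) mu_j, whose sum is o(n^2) when mu is epsilon-symmetric.

  Part (ii): take any coupling gamma of mu and nu and a k-set J. Transferring the coordinates of
  J one at a time from sigma to tau interpolates between mu_J(x) and prod_i mu_i(x_i), and each
  transfer of a coordinate j changes the probability by a cut term of gamma with I = {j} and B a
  cylinder event. The absolute cut terms summed over j are at most twice the cut value of gamma,
  and counting the cylinder events yields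
    sum_{|J| = k} TV(mu_J, (x)_{i in J} mu_i) <= (2 |Omega|)^k n^k D_cut(mu, nu) / 2. *)

section \<open>Cylinder probabilities and the product of marginals\<close>

lemma finite_cfgs [simp]: "finite (cfgs n :: (nat \<Rightarrow> 'a::finite) set)"
  unfolding cfgs_def by (rule finite_PiE) auto

definition cyl_prob :: "nat \<Rightarrow> ((nat \<Rightarrow> 'a) \<Rightarrow> real) \<Rightarrow> nat set \<Rightarrow> (nat \<Rightarrow> 'a) \<Rightarrow> real" where
  "cyl_prob n \<mu> J x = (\<Sum>\<sigma>\<in>cfgs n. if \<forall>i\<in>J. \<sigma> i = x i then \<mu> \<sigma> else 0)"

lemma marg_eq_cyl_prob:
  assumes "x \<in> PiE J (\<lambda>_. UNIV)"
  shows "marg n \<mu> J x = cyl_prob n \<mu> J x"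
proof -
  have "restrict \<sigma> J = x \<longleftrightarrow> (\<forall>i\<in>J. \<sigma> i = x i)" for \<sigma>
    using assms by (auto simp: fun_eq_iff PiE_def extensional_def)
  then show ?thesis
    unfolding marg_def cyl_prob_def by simp
qed

lemma marg1_eq_cyl_prob: "marg1 n \<mu> i \<omega> = cyl_prob n \<mu> {i} (\<lambda>_. \<omega>)"
  unfolding marg1_def cyl_prob_def by simp

lemma tv_marg_nonneg: "0 \<le> tv_marg n \<mu> J"
  unfolding tv_marg_def by (auto intro!: sum_nonneg)

lemma cyl_prob_diff_le_tv_marg:
  fixes \<mu> :: "(nat \<Rightarrow> 'a::finite) \<Rightarrow> real"
  assumes "finite J"
  shows "\<bar>cyl_prob n \<mu> J x - (\<Prod>i\<in>J. marg1 n \<mu> i (x i))\<bar> \<le> 2 * tv_marg n \<mu> J"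
proof -
  define x' where "x' = restrict x J"
  have x': "x' \<in> PiE J (\<lambda>_. UNIV)"
    unfolding x'_def by simp
  have "cyl_prob n \<mu> J x = marg n \<mu> J x'"
    using marg_eq_cyl_prob[OF x'] unfolding cyl_prob_def x'_def by simp
  moreover have "(\<Prod>i\<in>J. marg1 n \<mu> i (x i)) = (\<Prod>i\<in>J. marg1 n \<mu> i (x' i))"
    unfolding x'_def by simp
  moreover have "\<bar>marg n \<mu> J x' - (\<Prod>i\<in>J. marg1 n \<mu> i (x' i))\<bar>
      \<le> (\<Sum>\<tau>\<in>PiE J (\<lambda>_. UNIV). \<bar>marg n \<mu> J \<tau> - (\<Prod>i\<in>J. marg1 n \<mu> i (\<tau> i))\<bar>)"
    by (rule member_le_sum[OF x']) (auto intro: finite_PiE assms)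
  ultimately show ?thesis
    unfolding tv_marg_def by simp
qed

context
  fixes n :: nat and \<mu> :: "(nat \<Rightarrow> 'a::finite) \<Rightarrow> real"
  assumes prob: "is_prob n \<mu>"
begin

lemma prob_nonneg: "0 \<le> \<mu> \<sigma>"
  using prob unfolding is_prob_def by auto

lemma prob_outside: "\<sigma> \<notin> cfgs n \<Longrightarrow> \<mu> \<sigma> = 0"
  using prob unfolding is_prob_def by auto

lemma sum_prob: "sum \<mu> (cfgs n) = 1"
  using prob unfolding is_prob_def by auto

lemma marg1_nonneg: "0 \<le> marg1 n \<mu> i \<omega>"
  unfolding marg1_def by (auto intro!: sum_nonneg simp: prob_nonneg)

lemma sum_marg1: "(\<Sum>\<omega>\<in>UNIV. marg1 n \<mu> i \<omega>) = 1"
proof -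
  have "(\<Sum>\<omega>\<in>UNIV. marg1 n \<mu> i \<omega>) = (\<Sum>\<sigma>\<in>cfgs n. \<Sum>\<omega>\<in>UNIV. if \<sigma> i = \<omega> then \<mu> \<sigma> else 0)"
    unfolding marg1_def by (rule sum.swap)
  also have "\<dots> = 1"
    by (simp add: sum_prob)
  finally show ?thesis .
qed

lemma cyl_prob_prod_marg:
  assumes J: "J \<subseteq> {1..n}"
  shows "cyl_prob n (prod_marg n \<mu>) J x = (\<Prod>i\<in>J. marg1 n \<mu> i (x i))"
proof -
  define g where "g i \<omega> = (if i \<in> J \<and> \<omega> \<noteq> x i then 0 else marg1 n \<mu> i \<omega>)" for i \<omega>
  have "(if \<forall>i\<in>J. \<sigma> i = x i then prod_marg n \<mu> \<sigma> else 0) = (\<Prod>i\<in>{1..n}. g i (\<sigma> i))"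
    if "\<sigma> \<in> cfgs n" for \<sigma>
  proof (cases "\<forall>i\<in>J. \<sigma> i = x i")
    case True
    then show ?thesis
      using that unfolding prod_marg_def g_def by (auto intro!: prod.cong)
  next
    case False
    then obtain i where "i \<in> J" "\<sigma> i \<noteq> x i"
      by auto
    with J have "(\<Prod>i\<in>{1..n}. g i (\<sigma> i)) = 0"
      unfolding g_def by (intro prod_zero) auto
    with False show ?thesis
      by (simp only: if_not_P if_False)
  qed
  then have "cyl_prob n (prod_marg n \<mu>) J x = (\<Sum>\<sigma>\<in>cfgs n. \<Prod>i\<in>{1..n}. g i (\<sigma> i))"
    unfolding cyl_prob_def by (rule sum.cong[OF refl])
  also have "\<dots> = (\<Prod>i\<in>{1..n}. \<Sum>\<omega>\<in>UNIV. g i \<omega>)"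
    unfolding cfgs_def by (rule prod_sum_PiE[symmetric]) auto
  also have "\<dots> = (\<Prod>i\<in>{1..n}. if i \<in> J then marg1 n \<mu> i (x i) else 1)"
  proof (rule prod.cong[OF refl])
    fix i
    have "(\<Sum>\<omega>\<in>UNIV. g i \<omega>) = (\<Sum>\<omega>\<in>UNIV. if \<omega> = x i then marg1 n \<mu> i \<omega> else 0)" if "i \<in> J"
      unfolding g_def using that by (intro sum.cong) auto
    then show "(\<Sum>\<omega>\<in>UNIV. g i \<omega>) = (if i \<in> J then marg1 n \<mu> i (x i) else 1)"
      by (simp add: g_def sum_marg1)
  qed
  also have "\<dots> = (\<Prod>i\<in>J. marg1 n \<mu> i (x i))"
    using J by (simp add: prod.If_cases Int_absorb1)
  finally show ?thesis .
qed

lemma marg1_prod_marg: "i \<in> {1..n} \<Longrightarrow> marg1 n (prod_marg n \<mu>) i \<omega> = marg1 n \<mu> i \<omega>"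
  using cyl_prob_prod_marg[of "{i}" "\<lambda>_. \<omega>"] by (simp add: marg1_eq_cyl_prob)

lemma is_prob_prod_marg: "is_prob n (prod_marg n \<mu>)"
proof -
  have "sum (prod_marg n \<mu>) (cfgs n) = cyl_prob n (prod_marg n \<mu>) {} x" for x
    unfolding cyl_prob_def by simp
  then show ?thesis
    unfolding is_prob_def
    by (auto simp: cyl_prob_prod_marg prod_marg_def marg1_nonneg intro!: prod_nonneg)
qed

end

section \<open>Couplings and the cut metric\<close>

definition prod_coupling :: "((nat \<Rightarrow> 'a) \<Rightarrow> real) \<Rightarrow> ((nat \<Rightarrow> 'a) \<Rightarrow> real)
    \<Rightarrow> (nat \<Rightarrow> 'a) \<times> (nat \<Rightarrow> 'a) \<Rightarrow> real" where
  "prod_coupling \<mu> \<nu> p = \<mu> (fst p) * \<nu> (snd p)"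

lemma prod_coupling_in_couplings:
  fixes \<mu> \<nu> :: "(nat \<Rightarrow> 'a::finite) \<Rightarrow> real"
  assumes \<mu>: "is_prob n \<mu>" and \<nu>: "is_prob n \<nu>"
  shows "prod_coupling \<mu> \<nu> \<in> couplings n \<mu> \<nu>"
  unfolding couplings_def prod_coupling_def
  using prob_nonneg[OF \<mu>] prob_nonneg[OF \<nu>] prob_outside[OF \<mu>] prob_outside[OF \<nu>]
    sum_prob[OF \<mu>] sum_prob[OF \<nu>]
  by (auto simp: mem_Times_iff sum_distrib_left[symmetric] sum_distrib_right[symmetric])

lemma couplings_nonneg: "\<gamma> \<in> couplings n \<mu> \<nu> \<Longrightarrow> 0 \<le> \<gamma> p"
  unfolding couplings_def by blast

lemma sum_coupling_fst:
  fixes \<gamma> :: "(nat \<Rightarrow> 'a::finite) \<times> (nat \<Rightarrow> 'a) \<Rightarrow> real"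
  assumes "\<gamma> \<in> couplings n \<mu> \<nu>"
  shows "sum \<gamma> {p \<in> cfgs n \<times> cfgs n. P (fst p)} = (\<Sum>\<sigma>\<in>cfgs n. if P \<sigma> then \<mu> \<sigma> else 0)"
proof -
  have "sum \<gamma> {p \<in> cfgs n \<times> cfgs n. P (fst p)} = (\<Sum>p\<in>cfgs n \<times> cfgs n. if P (fst p) then \<gamma> p else 0)"
    by (simp add: sum.inter_filter)
  also have "\<dots> = (\<Sum>\<sigma>\<in>cfgs n. \<Sum>\<tau>\<in>cfgs n. if P \<sigma> then \<gamma> (\<sigma>, \<tau>) else 0)"
    unfolding sum.cartesian_product by (rule sum.cong) auto
  also have "\<dots> = (\<Sum>\<sigma>\<in>cfgs n. if P \<sigma> then \<mu> \<sigma> else 0)"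
    using assms unfolding couplings_def by (intro sum.cong) auto
  finally show ?thesis .
qed

lemma sum_coupling_snd:
  fixes \<gamma> :: "(nat \<Rightarrow> 'a::finite) \<times> (nat \<Rightarrow> 'a) \<Rightarrow> real"
  assumes "\<gamma> \<in> couplings n \<mu> \<nu>"
  shows "sum \<gamma> {p \<in> cfgs n \<times> cfgs n. P (snd p)} = (\<Sum>\<tau>\<in>cfgs n. if P \<tau> then \<nu> \<tau> else 0)"
proof -
  have "sum \<gamma> {p \<in> cfgs n \<times> cfgs n. P (snd p)} = (\<Sum>p\<in>cfgs n \<times> cfgs n. if P (snd p) then \<gamma> p else 0)"
    by (simp add: sum.inter_filter)
  also have "\<dots> = (\<Sum>\<sigma>\<in>cfgs n. \<Sum>\<tau>\<in>cfgs n. if P \<tau> then \<gamma> (\<sigma>, \<tau>) else 0)"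
    unfolding sum.cartesian_product by (rule sum.cong) auto
  also have "\<dots> = (\<Sum>\<tau>\<in>cfgs n. \<Sum>\<sigma>\<in>cfgs n. if P \<tau> then \<gamma> (\<sigma>, \<tau>) else 0)"
    by (rule sum.swap)
  also have "\<dots> = (\<Sum>\<tau>\<in>cfgs n. if P \<tau> then \<nu> \<tau> else 0)"
    using assms unfolding couplings_def by (intro sum.cong) auto
  finally show ?thesis .
qed

lemma sum_coupling:
  fixes \<gamma> :: "(nat \<Rightarrow> 'a::finite) \<times> (nat \<Rightarrow> 'a) \<Rightarrow> real"
  assumes "\<gamma> \<in> couplings n \<mu> \<nu>" "is_prob n \<mu>"
  shows "sum \<gamma> (cfgs n \<times> cfgs n) = 1"
  using sum_coupling_fst[OF assms(1), of "\<lambda>_. True"] sum_prob[OF assms(2)] by simp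

definition cut_term :: "((nat \<Rightarrow> 'a) \<times> (nat \<Rightarrow> 'a) \<Rightarrow> real) \<Rightarrow> ((nat \<Rightarrow> 'a) \<times> (nat \<Rightarrow> 'a)) set
    \<Rightarrow> 'a \<Rightarrow> nat \<Rightarrow> real" where
  "cut_term \<gamma> B \<omega> i =
     (\<Sum>p\<in>B. \<gamma> p * ((if fst p i = \<omega> then 1 else 0) - (if snd p i = \<omega> then 1 else 0)))"

lemma cut_val_eq_Max:
  fixes \<gamma> :: "(nat \<Rightarrow> 'a::finite) \<times> (nat \<Rightarrow> 'a) \<Rightarrow> real"
  shows "cut_val n \<gamma> =
    Max {\<bar>\<Sum>i\<in>I. cut_term \<gamma> B \<omega> i\<bar> | I B \<omega>. I \<subseteq> {1..n} \<and> B \<subseteq> cfgs n \<times> cfgs n}"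
  unfolding cut_val_def cut_term_def ..

lemma finite_cut_values:
  fixes \<gamma> :: "(nat \<Rightarrow> 'a::finite) \<times> (nat \<Rightarrow> 'a) \<Rightarrow> real"
  shows "finite {\<bar>\<Sum>i\<in>I. cut_term \<gamma> B \<omega> i\<bar> | I B \<omega>. I \<subseteq> {1..n} \<and> B \<subseteq> cfgs n \<times> cfgs n}"
  by (rule finite_subset[where B = "(\<lambda>(I, B, \<omega>). \<bar>\<Sum>i\<in>I. cut_term \<gamma> B \<omega> i\<bar>) `
        (Pow {1..n} \<times> Pow (cfgs n \<times> cfgs n) \<times> UNIV)"])
    (auto intro!: image_eqI[where x = "(I, B, \<omega>)" for I B \<omega>])

lemma abs_sum_cut_term_le_cut_val:
  fixes \<gamma> :: "(nat \<Rightarrow> 'a::finite) \<times> (nat \<Rightarrow> 'a) \<Rightarrow> real"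
  assumes "I \<subseteq> {1..n}" "B \<subseteq> cfgs n \<times> cfgs n"
  shows "\<bar>\<Sum>i\<in>I. cut_term \<gamma> B \<omega> i\<bar> \<le> cut_val n \<gamma>"
  unfolding cut_val_eq_Max using assms by (intro Max_ge finite_cut_values) blast

lemma cut_val_le:
  fixes \<gamma> :: "(nat \<Rightarrow> 'a::finite) \<times> (nat \<Rightarrow> 'a) \<Rightarrow> real"
  assumes "\<And>I B \<omega>. I \<subseteq> {1..n} \<Longrightarrow> B \<subseteq> cfgs n \<times> cfgs n \<Longrightarrow> \<bar>\<Sum>i\<in>I. cut_term \<gamma> B \<omega> i\<bar> \<le> M"
  shows "cut_val n \<gamma> \<le> M"
  unfolding cut_val_eq_Max using assms by (subst Max_le_iff[OF finite_cut_values]) auto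

lemma cut_val_nonneg: "0 \<le> cut_val n (\<gamma> :: (nat \<Rightarrow> 'a::finite) \<times> (nat \<Rightarrow> 'a) \<Rightarrow> real)"
  using abs_sum_cut_term_le_cut_val[of "{}" n "{}" \<gamma>] by simp

lemma cut_dist_le_cut_val:
  fixes \<gamma> :: "(nat \<Rightarrow> 'a::finite) \<times> (nat \<Rightarrow> 'a) \<Rightarrow> real"
  assumes "\<gamma> \<in> couplings n \<mu> \<nu>"
  shows "cut_dist n \<mu> \<nu> \<le> cut_val n \<gamma> / real n"
proof -
  have "Inf (cut_val n ` couplings n \<mu> \<nu>) \<le> cut_val n \<gamma>"
    using assms by (intro cInf_lower bdd_belowI[of _ 0]) (auto intro: cut_val_nonneg)
  then show ?thesis
    unfolding cut_dist_def by (simp add: divide_right_mono)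
qed

lemma le_cut_dist:
  fixes \<mu> \<nu> :: "(nat \<Rightarrow> 'a::finite) \<Rightarrow> real"
  assumes "couplings n \<mu> \<nu> \<noteq> {}" and "\<And>\<gamma>. \<gamma> \<in> couplings n \<mu> \<nu> \<Longrightarrow> c \<le> cut_val n \<gamma>"
  shows "c / real n \<le> cut_dist n \<mu> \<nu>"
proof -
  have "c \<le> Inf (cut_val n ` couplings n \<mu> \<nu>)"
    using assms by (intro cInf_greatest) auto
  then show ?thesis
    unfolding cut_dist_def by (simp add: divide_right_mono)
qed

section \<open>Symmetric measures are close to the product of their marginals\<close>

lemma abs_weighted_sum_le_sqrt:
  fixes w z :: "'b \<Rightarrow> real"
  assumes "finite A" "B \<subseteq> A" "\<And>x. x \<in> A \<Longrightarrow> 0 \<le> w x" "sum w A = 1"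
  shows "\<bar>\<Sum>x\<in>B. w x * z x\<bar> \<le> sqrt (\<Sum>x\<in>A. w x * (z x)\<^sup>2)"
proof -
  define m where "m = (\<Sum>x\<in>A. w x * \<bar>z x\<bar>)"
  have "\<bar>\<Sum>x\<in>B. w x * z x\<bar> \<le> (\<Sum>x\<in>B. w x * \<bar>z x\<bar>)"
    using assms(2,3) by (intro order_trans[OF sum_abs] sum_mono) (auto simp: abs_mult)
  also have "\<dots> \<le> m"
    unfolding m_def using assms by (intro sum_mono2) auto
  also have "m \<le> sqrt (\<Sum>x\<in>A. w x * (z x)\<^sup>2)"
  proof (rule real_le_rsqrt)
    have "0 \<le> (\<Sum>x\<in>A. w x * (\<bar>z x\<bar> - m)\<^sup>2)"
      using assms by (auto intro!: sum_nonneg)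
    also have "\<dots> = (\<Sum>x\<in>A. w x * (z x)\<^sup>2) - 2 * m * (\<Sum>x\<in>A. w x * \<bar>z x\<bar>) + m\<^sup>2 * sum w A"
      by (simp add: power2_eq_square algebra_simps sum.distrib sum_subtractf sum_distrib_left)
    finally show "m\<^sup>2 \<le> (\<Sum>x\<in>A. w x * (z x)\<^sup>2)"
      using assms(4) unfolding m_def[symmetric] by (simp add: power2_eq_square)
  qed
  finally show ?thesis .
qed

lemma sum_prod_weights_sq_diff:
  fixes \<mu> \<nu> f :: "'b \<Rightarrow> real"
  assumes "sum \<mu> A = 1" "sum \<nu> A = 1"
  shows "(\<Sum>p\<in>A \<times> A. \<mu> (fst p) * \<nu> (snd p) * (f (fst p) - f (snd p))\<^sup>2)
    = (\<Sum>\<sigma>\<in>A. \<mu> \<sigma> * (f \<sigma>)\<^sup>2) + (\<Sum>\<tau>\<in>A. \<nu> \<tau> * (f \<tau>)\<^sup>2)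
      - 2 * ((\<Sum>\<sigma>\<in>A. \<mu> \<sigma> * f \<sigma>) * (\<Sum>\<tau>\<in>A. \<nu> \<tau> * f \<tau>))"
proof -
  have "(\<Sum>p\<in>A \<times> A. \<mu> (fst p) * \<nu> (snd p) * (f (fst p) - f (snd p))\<^sup>2)
      = (\<Sum>\<sigma>\<in>A. \<Sum>\<tau>\<in>A. \<mu> \<sigma> * (f \<sigma>)\<^sup>2 * \<nu> \<tau> + \<mu> \<sigma> * (\<nu> \<tau> * (f \<tau>)\<^sup>2)
          - 2 * (\<mu> \<sigma> * f \<sigma>) * (\<nu> \<tau> * f \<tau>))"
    unfolding sum.cartesian_product by (rule sum.cong) (auto simp: power2_eq_square algebra_simps)
  also have "\<dots> = (\<Sum>\<sigma>\<in>A. \<mu> \<sigma> * (f \<sigma>)\<^sup>2) * sum \<nu> A + sum \<mu> A * (\<Sum>\<tau>\<in>A. \<nu> \<tau> * (f \<tau>)\<^sup>2)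
      - 2 * ((\<Sum>\<sigma>\<in>A. \<mu> \<sigma> * f \<sigma>) * (\<Sum>\<tau>\<in>A. \<nu> \<tau> * f \<tau>))"
    by (simp only: sum_subtractf sum.distrib sum_distrib_left[symmetric] sum_distrib_right[symmetric])
  finally show ?thesis
    using assms by simp
qed

definition occurrences :: "nat set \<Rightarrow> 'a \<Rightarrow> (nat \<Rightarrow> 'a) \<Rightarrow> real" where
  "occurrences I \<omega> \<sigma> = (\<Sum>i\<in>I. if \<sigma> i = \<omega> then 1 else 0)"

lemma sum_cut_term_eq_occurrences:
  "(\<Sum>i\<in>I. cut_term \<gamma> B \<omega> i) = (\<Sum>p\<in>B. \<gamma> p * (occurrences I \<omega> (fst p) - occurrences I \<omega> (snd p)))"
  unfolding cut_term_def occurrences_def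
  by (subst sum.swap) (simp only: sum_subtractf[symmetric] sum_distrib_left)

lemma sum_occurrences: "(\<Sum>\<sigma>\<in>cfgs n. \<mu> \<sigma> * occurrences I \<omega> \<sigma>) = (\<Sum>i\<in>I. marg1 n \<mu> i \<omega>)"
proof -
  have "\<mu> \<sigma> * occurrences I \<omega> \<sigma> = (\<Sum>i\<in>I. if \<sigma> i = \<omega> then \<mu> \<sigma> else 0)" for \<sigma>
    unfolding occurrences_def sum_distrib_left by (intro sum.cong) auto
  then have "(\<Sum>\<sigma>\<in>cfgs n. \<mu> \<sigma> * occurrences I \<omega> \<sigma>)
      = (\<Sum>\<sigma>\<in>cfgs n. \<Sum>i\<in>I. if \<sigma> i = \<omega> then \<mu> \<sigma> else 0)"
    by simp
  also have "\<dots> = (\<Sum>i\<in>I. marg1 n \<mu> i \<omega>)"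
    unfolding marg1_def by (rule sum.swap)
  finally show ?thesis .
qed

lemma sum_occurrences_sq:
  "(\<Sum>\<sigma>\<in>cfgs n. \<mu> \<sigma> * (occurrences I \<omega> \<sigma>)\<^sup>2) = (\<Sum>i\<in>I. \<Sum>j\<in>I. cyl_prob n \<mu> {i, j} (\<lambda>_. \<omega>))"
proof -
  have "\<mu> \<sigma> * (occurrences I \<omega> \<sigma>)\<^sup>2 = (\<Sum>i\<in>I. \<Sum>j\<in>I. if \<forall>l\<in>{i, j}. \<sigma> l = \<omega> then \<mu> \<sigma> else 0)"
    for \<sigma>
    unfolding occurrences_def power2_eq_square sum_product unfolding sum_distrib_left
    by (intro sum.cong refl) auto
  then have "(\<Sum>\<sigma>\<in>cfgs n. \<mu> \<sigma> * (occurrences I \<omega> \<sigma>)\<^sup>2)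
      = (\<Sum>\<sigma>\<in>cfgs n. \<Sum>i\<in>I. \<Sum>j\<in>I. if \<forall>l\<in>{i, j}. \<sigma> l = \<omega> then \<mu> \<sigma> else 0)"
    by simp
  also have "\<dots> = (\<Sum>i\<in>I. \<Sum>\<sigma>\<in>cfgs n. \<Sum>j\<in>I. if \<forall>l\<in>{i, j}. \<sigma> l = \<omega> then \<mu> \<sigma> else 0)"
    by (rule sum.swap)
  also have "\<dots> = (\<Sum>i\<in>I. \<Sum>j\<in>I. cyl_prob n \<mu> {i, j} (\<lambda>_. \<omega>))"
    unfolding cyl_prob_def by (intro sum.cong refl sum.swap)
  finally show ?thesis .
qed

definition pair_tv_sum :: "nat \<Rightarrow> ((nat \<Rightarrow> 'a) \<Rightarrow> real) \<Rightarrow> real" where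
  "pair_tv_sum n \<mu> = (\<Sum>i\<in>{1..n}. \<Sum>j\<in>{1..n} - {i}. tv_marg n \<mu> {i, j})"

context
  fixes n :: nat and \<mu> :: "(nat \<Rightarrow> 'a::finite) \<Rightarrow> real"
  assumes prob: "is_prob n \<mu>"
begin

lemma prod_coupling_sq_diff_occurrences:
  assumes "I \<subseteq> {1..n}"
  shows "(\<Sum>p\<in>cfgs n \<times> cfgs n. prod_coupling \<mu> (prod_marg n \<mu>) p
            * (occurrences I \<omega> (fst p) - occurrences I \<omega> (snd p))\<^sup>2)
    = (\<Sum>i\<in>I. \<Sum>j\<in>I. cyl_prob n \<mu> {i, j} (\<lambda>_. \<omega>) + cyl_prob n (prod_marg n \<mu>) {i, j} (\<lambda>_. \<omega>)
          - 2 * (marg1 n \<mu> i \<omega> * marg1 n \<mu> j \<omega>))"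
proof -
  let ?m = "\<lambda>i. marg1 n \<mu> i \<omega>"
  have "(\<Sum>\<tau>\<in>cfgs n. prod_marg n \<mu> \<tau> * occurrences I \<omega> \<tau>) = (\<Sum>i\<in>I. ?m i)"
    unfolding sum_occurrences using assms by (intro sum.cong) (auto simp: marg1_prod_marg[OF prob])
  moreover have "2 * ((\<Sum>i\<in>I. ?m i) * (\<Sum>j\<in>I. ?m j)) = (\<Sum>i\<in>I. \<Sum>j\<in>I. 2 * (?m i * ?m j))"
    unfolding sum_product unfolding sum_distrib_left ..
  ultimately show ?thesis
    unfolding prod_coupling_def
      sum_prod_weights_sq_diff[OF sum_prob[OF prob] sum_prob[OF is_prob_prod_marg[OF prob]]]
    by (simp only: sum_occurrences sum_occurrences_sq sum.distrib sum_subtractf)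
qed

lemma pair_moment_le:
  assumes "i \<in> {1..n}" "j \<in> {1..n}"
  shows "cyl_prob n \<mu> {i, j} (\<lambda>_. \<omega>) + cyl_prob n (prod_marg n \<mu>) {i, j} (\<lambda>_. \<omega>)
      - 2 * (marg1 n \<mu> i \<omega> * marg1 n \<mu> j \<omega>) \<le> (if i = j then 2 else 2 * tv_marg n \<mu> {i, j})"
proof (cases "i = j")
  case True
  let ?m = "marg1 n \<mu> i \<omega>"
  have "0 \<le> (?m - 1/2) * (?m - 1/2)"
    by simp
  then have "?m \<le> 1/4 + ?m * ?m"
    by (simp add: algebra_simps)
  with True assms show ?thesis
    by (simp add: marg1_eq_cyl_prob[symmetric] marg1_prod_marg[OF prob])
next
  case False
  with assms show ?thesis
    using cyl_prob_diff_le_tv_marg[of "{i, j}" n \<mu> "\<lambda>_. \<omega>"]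
    by (simp add: cyl_prob_prod_marg[OF prob])
qed

lemma prod_coupling_sq_diff_occurrences_le:
  assumes I: "I \<subseteq> {1..n}"
  shows "(\<Sum>p\<in>cfgs n \<times> cfgs n. prod_coupling \<mu> (prod_marg n \<mu>) p
            * (occurrences I \<omega> (fst p) - occurrences I \<omega> (snd p))\<^sup>2)
    \<le> 2 * real n + 2 * pair_tv_sum n \<mu>"
proof -
  have fin: "finite I"
    using I finite_subset by blast
  have diag: "(\<Sum>j\<in>I. if i = j then 2 else 2 * tv_marg n \<mu> {i, j})
      = 2 + (\<Sum>j\<in>I - {i}. 2 * tv_marg n \<mu> {i, j})" if "i \<in> I" for i
    using fin that by (simp add: sum.remove cong: sum.cong_simp)
  have "(\<Sum>p\<in>cfgs n \<times> cfgs n. prod_coupling \<mu> (prod_marg n \<mu>) p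
            * (occurrences I \<omega> (fst p) - occurrences I \<omega> (snd p))\<^sup>2)
      \<le> (\<Sum>i\<in>I. \<Sum>j\<in>I. if i = j then 2 else 2 * tv_marg n \<mu> {i, j})"
    unfolding prod_coupling_sq_diff_occurrences[OF I]
    using I by (intro sum_mono pair_moment_le) auto
  also have "\<dots> = (\<Sum>i\<in>I. 2 + (\<Sum>j\<in>I - {i}. 2 * tv_marg n \<mu> {i, j}))"
    using diag by simp
  also have "\<dots> \<le> (\<Sum>i\<in>I. 2 + (\<Sum>j\<in>{1..n} - {i}. 2 * tv_marg n \<mu> {i, j}))"
    using I by (intro sum_mono add_left_mono sum_mono2) (auto simp: tv_marg_nonneg)
  also have "\<dots> \<le> (\<Sum>i\<in>{1..n}. 2 + (\<Sum>j\<in>{1..n} - {i}. 2 * tv_marg n \<mu> {i, j}))"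
    using I by (intro sum_mono2) (auto intro!: add_nonneg_nonneg sum_nonneg simp: tv_marg_nonneg)
  also have "\<dots> = 2 * real n + 2 * pair_tv_sum n \<mu>"
    unfolding pair_tv_sum_def by (simp add: sum.distrib sum_distrib_left)
  finally show ?thesis .
qed

lemma cut_val_prod_coupling_le:
  "cut_val n (prod_coupling \<mu> (prod_marg n \<mu>)) \<le> sqrt (2 * real n + 2 * pair_tv_sum n \<mu>)"
proof (rule cut_val_le)
  fix I and B :: "((nat \<Rightarrow> 'a) \<times> (nat \<Rightarrow> 'a)) set" and \<omega> :: 'a
  assume I: "I \<subseteq> {1..n}" and B: "B \<subseteq> cfgs n \<times> cfgs n"
  let ?\<gamma> = "prod_coupling \<mu> (prod_marg n \<mu>)"
  have \<gamma>: "?\<gamma> \<in> couplings n \<mu> (prod_marg n \<mu>)"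
    by (intro prod_coupling_in_couplings prob is_prob_prod_marg)
  have "\<bar>\<Sum>i\<in>I. cut_term ?\<gamma> B \<omega> i\<bar> \<le> sqrt (\<Sum>p\<in>cfgs n \<times> cfgs n.
      ?\<gamma> p * (occurrences I \<omega> (fst p) - occurrences I \<omega> (snd p))\<^sup>2)"
    unfolding sum_cut_term_eq_occurrences
    by (rule abs_weighted_sum_le_sqrt)
      (use B couplings_nonneg[OF \<gamma>] sum_coupling[OF \<gamma> prob] in auto)
  also have "\<dots> \<le> sqrt (2 * real n + 2 * pair_tv_sum n \<mu>)"
    using prod_coupling_sq_diff_occurrences_le[OF I] by simp
  finally show "\<bar>\<Sum>i\<in>I. cut_term ?\<gamma> B \<omega> i\<bar> \<le> sqrt (2 * real n + 2 * pair_tv_sum n \<mu>)" .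
qed

lemma symmetric_imp_cut_dist_prod_marg_less:
  assumes "0 < \<epsilon>" "\<epsilon> < 1/2" "4 / \<epsilon>\<^sup>2 < real n" and sym: "eps_symmetric n ((\<epsilon>/9)^3) \<mu>"
  shows "cut_dist n \<mu> (prod_marg n \<mu>) < \<epsilon>"
proof -
  have "0 < 4 / \<epsilon>\<^sup>2"
    using assms(1) by simp
  with assms(3) have n: "0 < real n"
    by linarith
  have "pair_tv_sum n \<mu> < (\<epsilon>/9)^3 * (real n)\<^sup>2"
    using sym n unfolding eps_symmetric_def pair_tv_sum_def by (simp add: field_simps)
  also have "\<dots> \<le> \<epsilon>\<^sup>2 / 4 * (real n)\<^sup>2"
    using assms(1,2) by (intro mult_right_mono) (auto simp: power_divide power3_eq_cube power2_eq_square)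
  finally have "2 * pair_tv_sum n \<mu> < \<epsilon>\<^sup>2 * (real n)\<^sup>2 / 2"
    by simp
  moreover have "2 * real n < \<epsilon>\<^sup>2 * (real n)\<^sup>2 / 2"
    using assms(1,3) n by (simp add: field_simps power2_eq_square)
  ultimately have "sqrt (2 * real n + 2 * pair_tv_sum n \<mu>) < sqrt ((\<epsilon> * real n)\<^sup>2)"
    by (intro real_sqrt_less_mono) (simp add: power_mult_distrib)
  then have "cut_val n (prod_coupling \<mu> (prod_marg n \<mu>)) < \<epsilon> * real n"
    using cut_val_prod_coupling_le assms(1) n by simp
  then have "cut_val n (prod_coupling \<mu> (prod_marg n \<mu>)) / real n < \<epsilon>"
    using n by (simp add: pos_divide_less_eq)
  moreover have "cut_dist n \<mu> (prod_marg n \<mu>) \<le> cut_val n (prod_coupling \<mu> (prod_marg n \<mu>)) / real n"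
    by (intro cut_dist_le_cut_val prod_coupling_in_couplings prob is_prob_prod_marg)
  ultimately show ?thesis
    by linarith
qed

end

section \<open>Cut-closeness implies approximate k-wise independence\<close>

lemma sum_PiE_insert:
  assumes "j \<notin> R"
  shows "(\<Sum>x\<in>PiE (insert j R) B. f x) = (\<Sum>y\<in>PiE R B. \<Sum>\<omega>\<in>B j. f (y(j := \<omega>)))"
proof -
  have "(\<Sum>x\<in>PiE (insert j R) B. f x) = (\<Sum>(\<omega>, y)\<in>B j \<times> PiE R B. f (y(j := \<omega>)))"
    unfolding PiE_insert_eq by (subst sum.reindex[OF inj_combinator[OF assms]]) (simp add: case_prod_beta)
  also have "\<dots> = (\<Sum>\<omega>\<in>B j. \<Sum>y\<in>PiE R B. f (y(j := \<omega>)))"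
    by (simp add: sum.cartesian_product)
  also have "\<dots> = (\<Sum>y\<in>PiE R B. \<Sum>\<omega>\<in>B j. f (y(j := \<omega>)))"
    by (rule sum.swap)
  finally show ?thesis .
qed

lemma sum_subsets_card_Suc:
  assumes "finite A"
  shows "(\<Sum>J\<in>{J. J \<subseteq> A \<and> card J = Suc m}. \<Sum>j\<in>J. f (J - {j}) j)
    = (\<Sum>R\<in>{R. R \<subseteq> A \<and> card R = m}. \<Sum>j\<in>A - R. f R j)"
proof -
  let ?K = "{J. J \<subseteq> A \<and> card J = Suc m}" and ?K' = "{R. R \<subseteq> A \<and> card R = m}"
  have fin: "finite ?K" "finite ?K'"
    using assms by (auto intro: finite_subset[of _ "Pow A"])
  have bij: "bij_betw (\<lambda>(R, j). (insert j R, j)) (Sigma ?K' (\<lambda>R. A - R)) (Sigma ?K (\<lambda>J. J))"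
  proof (rule bij_betw_byWitness[where f' = "\<lambda>(J, j). (J - {j}, j)"])
    show "(\<lambda>(R, j). (insert j R, j)) ` Sigma ?K' (\<lambda>R. A - R) \<subseteq> Sigma ?K (\<lambda>J. J)"
      using assms by (auto dest: finite_subset)
    show "(\<lambda>(J, j). (J - {j}, j)) ` Sigma ?K (\<lambda>J. J) \<subseteq> Sigma ?K' (\<lambda>R. A - R)"
      using assms by (auto dest: finite_subset)
  qed auto
  have "(\<Sum>J\<in>?K. \<Sum>j\<in>J. f (J - {j}) j) = (\<Sum>(J, j)\<in>Sigma ?K (\<lambda>J. J). f (J - {j}) j)"
    using fin assms by (intro sum.Sigma) (auto dest: finite_subset)
  also have "\<dots> = (\<Sum>(R, j)\<in>Sigma ?K' (\<lambda>R. A - R). f (insert j R - {j}) j)"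
    by (subst sum.reindex_bij_betw[OF bij, symmetric]) (simp add: case_prod_beta)
  also have "\<dots> = (\<Sum>(R, j)\<in>Sigma ?K' (\<lambda>R. A - R). f R j)"
    by (intro sum.cong refl) auto
  also have "\<dots> = (\<Sum>R\<in>?K'. \<Sum>j\<in>A - R. f R j)"
    using fin assms by (intro sum.Sigma[symmetric]) auto
  finally show ?thesis .
qed

definition hybrid_event :: "nat \<Rightarrow> nat set \<Rightarrow> nat set \<Rightarrow> (nat \<Rightarrow> 'a)
    \<Rightarrow> ((nat \<Rightarrow> 'a) \<times> (nat \<Rightarrow> 'a)) set" where
  "hybrid_event n J T x = {p \<in> cfgs n \<times> cfgs n. (\<forall>i\<in>T. snd p i = x i) \<and> (\<forall>i\<in>J - T. fst p i = x i)}"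

lemma sum_hybrid_event_empty:
  fixes \<gamma> :: "(nat \<Rightarrow> 'a::finite) \<times> (nat \<Rightarrow> 'a) \<Rightarrow> real"
  assumes "\<gamma> \<in> couplings n \<mu> \<nu>"
  shows "sum \<gamma> (hybrid_event n J {} x) = cyl_prob n \<mu> J x"
  using sum_coupling_fst[OF assms, of "\<lambda>\<sigma>. \<forall>i\<in>J. \<sigma> i = x i"]
  unfolding hybrid_event_def cyl_prob_def by simp

lemma sum_hybrid_event_full:
  fixes \<gamma> :: "(nat \<Rightarrow> 'a::finite) \<times> (nat \<Rightarrow> 'a) \<Rightarrow> real"
  assumes "\<gamma> \<in> couplings n \<mu> \<nu>"
  shows "sum \<gamma> (hybrid_event n J J x) = cyl_prob n \<nu> J x"
  using sum_coupling_snd[OF assms, of "\<lambda>\<tau>. \<forall>i\<in>J. \<tau> i = x i"]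
  unfolding hybrid_event_def cyl_prob_def by simp

lemma sum_hybrid_event_insert:
  fixes \<gamma> :: "(nat \<Rightarrow> 'a::finite) \<times> (nat \<Rightarrow> 'a) \<Rightarrow> real"
  assumes "j \<in> J" "T \<subseteq> J - {j}"
  shows "sum \<gamma> (hybrid_event n J T x) - sum \<gamma> (hybrid_event n J (insert j T) x)
    = cut_term \<gamma> (hybrid_event n (J - {j}) T x) (x j) j"
proof -
  let ?E = "hybrid_event n (J - {j}) T x"
  have "finite ?E"
    unfolding hybrid_event_def by simp
  moreover have "hybrid_event n J T x = {p \<in> ?E. fst p j = x j}"
    using assms unfolding hybrid_event_def by auto
  moreover have "hybrid_event n J (insert j T) x = {p \<in> ?E. snd p j = x j}"
    using assms unfolding hybrid_event_def by auto
  moreover have "\<gamma> p * ((if fst p j = x j then 1 else 0) - (if snd p j = x j then 1 else 0))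
      = (if fst p j = x j then \<gamma> p else 0) - (if snd p j = x j then \<gamma> p else 0)" for p
    by simp
  ultimately show ?thesis
    unfolding cut_term_def by (simp add: sum.inter_filter sum_subtractf)
qed

lemma abs_diff_hybrid_event_le:
  fixes \<gamma> :: "(nat \<Rightarrow> 'a::finite) \<times> (nat \<Rightarrow> 'a) \<Rightarrow> real"
  assumes "finite J" "S \<subseteq> J"
  shows "\<bar>sum \<gamma> (hybrid_event n J {} x) - sum \<gamma> (hybrid_event n J S x)\<bar>
    \<le> (\<Sum>j\<in>S. \<Sum>T\<in>Pow (J - {j}). \<bar>cut_term \<gamma> (hybrid_event n (J - {j}) T x) (x j) j\<bar>)"
  using finite_subset[OF assms(2,1)] assms(2)
proof (induction S rule: finite_induct)
  case empty
  then show ?case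
    by simp
next
  case (insert j S)
  let ?H = "\<lambda>T. sum \<gamma> (hybrid_event n J T x)"
  have "\<bar>?H {} - ?H (insert j S)\<bar> \<le> \<bar>?H {} - ?H S\<bar> + \<bar>?H S - ?H (insert j S)\<bar>"
    by linarith
  also have "\<bar>?H S - ?H (insert j S)\<bar> = \<bar>cut_term \<gamma> (hybrid_event n (J - {j}) S x) (x j) j\<bar>"
    using insert by (subst sum_hybrid_event_insert) auto
  also have "\<dots> \<le> (\<Sum>T\<in>Pow (J - {j}). \<bar>cut_term \<gamma> (hybrid_event n (J - {j}) T x) (x j) j\<bar>)"
    using insert assms(1) by (intro member_le_sum) auto
  finally show ?case
    using insert by simp
qed

lemma sum_abs_cut_term_le:
  fixes \<gamma> :: "(nat \<Rightarrow> 'a::finite) \<times> (nat \<Rightarrow> 'a) \<Rightarrow> real"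
  assumes S: "S \<subseteq> {1..n}" and B: "B \<subseteq> cfgs n \<times> cfgs n"
  shows "(\<Sum>j\<in>S. \<bar>cut_term \<gamma> B \<omega> j\<bar>) \<le> 2 * cut_val n \<gamma>"
proof -
  let ?c = "cut_term \<gamma> B \<omega>"
  let ?P = "{j \<in> S. 0 \<le> ?c j}" and ?N = "{j \<in> S. \<not> 0 \<le> ?c j}"
  have "finite S"
    using S finite_subset by blast
  have "\<bar>sum ?c ?P\<bar> \<le> cut_val n \<gamma>" "\<bar>sum ?c ?N\<bar> \<le> cut_val n \<gamma>"
    using S B by (auto intro!: abs_sum_cut_term_le_cut_val)
  have "(\<Sum>j\<in>S. \<bar>?c j\<bar>) = (\<Sum>j\<in>S. (if 0 \<le> ?c j then ?c j else 0) - (if \<not> 0 \<le> ?c j then ?c j else 0))"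
    by (intro sum.cong) auto
  also have "\<dots> = sum ?c ?P - sum ?c ?N"
    using \<open>finite S\<close> by (simp add: sum_subtractf sum.inter_filter)
  finally show ?thesis
    using \<open>\<bar>sum ?c ?P\<bar> \<le> cut_val n \<gamma>\<close> \<open>\<bar>sum ?c ?N\<bar> \<le> cut_val n \<gamma>\<close> by linarith
qed

lemma sum_hybrid_cut_terms_le:
  fixes \<gamma> :: "(nat \<Rightarrow> 'a::finite) \<times> (nat \<Rightarrow> 'a) \<Rightarrow> real"
  assumes R: "R \<subseteq> {1..n}"
  shows "(\<Sum>j\<in>{1..n} - R. \<Sum>T\<in>Pow R. \<Sum>y\<in>PiE R (\<lambda>_. UNIV). \<Sum>\<omega>\<in>UNIV.
            \<bar>cut_term \<gamma> (hybrid_event n R T y) \<omega> j\<bar>)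
    \<le> (2 * real (card (UNIV :: 'a set))) ^ Suc (card R) * cut_val n \<gamma>"
proof -
  let ?d = "\<lambda>j T y \<omega>. \<bar>cut_term \<gamma> (hybrid_event n R T y) \<omega> j\<bar>"
  have "finite R"
    using R finite_subset by blast
  have "(\<Sum>j\<in>{1..n} - R. \<Sum>T\<in>Pow R. \<Sum>y\<in>PiE R (\<lambda>_. UNIV). \<Sum>\<omega>\<in>UNIV. ?d j T y \<omega>)
      = (\<Sum>T\<in>Pow R. \<Sum>j\<in>{1..n} - R. \<Sum>y\<in>PiE R (\<lambda>_. UNIV). \<Sum>\<omega>\<in>UNIV. ?d j T y \<omega>)"
    by (rule sum.swap)
  also have "\<dots> = (\<Sum>T\<in>Pow R. \<Sum>y\<in>PiE R (\<lambda>_. UNIV). \<Sum>j\<in>{1..n} - R. \<Sum>\<omega>\<in>UNIV. ?d j T y \<omega>)"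
    by (intro sum.cong refl sum.swap)
  also have "\<dots> = (\<Sum>T\<in>Pow R. \<Sum>y\<in>PiE R (\<lambda>_. UNIV). \<Sum>\<omega>\<in>UNIV. \<Sum>j\<in>{1..n} - R. ?d j T y \<omega>)"
    by (intro sum.cong refl sum.swap)
  also have "\<dots> \<le> (\<Sum>T\<in>Pow R. \<Sum>y\<in>PiE R (\<lambda>_. UNIV::'a set). \<Sum>\<omega>\<in>(UNIV::'a set). 2 * cut_val n \<gamma>)"
    by (intro sum_mono sum_abs_cut_term_le) (auto simp: hybrid_event_def)
  also have "\<dots> = (2 * real (card (UNIV :: 'a set))) ^ Suc (card R) * cut_val n \<gamma>"
    using \<open>finite R\<close> by (simp add: card_Pow card_PiE power_mult_distrib)
  finally show ?thesis .
qed

context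
  fixes n :: nat and \<mu> :: "(nat \<Rightarrow> 'a::finite) \<Rightarrow> real"
  assumes prob: "is_prob n \<mu>"
begin

lemma two_tv_marg_le_hybrid:
  assumes J: "J \<subseteq> {1..n}" and \<gamma>: "\<gamma> \<in> couplings n \<mu> (prod_marg n \<mu>)"
  shows "2 * tv_marg n \<mu> J \<le> (\<Sum>j\<in>J. \<Sum>T\<in>Pow (J - {j}). \<Sum>y\<in>PiE (J - {j}) (\<lambda>_. UNIV).
      \<Sum>\<omega>\<in>UNIV. \<bar>cut_term \<gamma> (hybrid_event n (J - {j}) T y) \<omega> j\<bar>)"
proof -
  have fin: "finite J"
    using J finite_subset by blast
  let ?d = "\<lambda>x j T. \<bar>cut_term \<gamma> (hybrid_event n (J - {j}) T x) (x j) j\<bar>"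
  have "2 * tv_marg n \<mu> J = (\<Sum>x\<in>PiE J (\<lambda>_. UNIV).
      \<bar>sum \<gamma> (hybrid_event n J {} x) - sum \<gamma> (hybrid_event n J J x)\<bar>)"
    unfolding tv_marg_def sum_hybrid_event_empty[OF \<gamma>] sum_hybrid_event_full[OF \<gamma>]
    by (auto simp: marg_eq_cyl_prob cyl_prob_prod_marg[OF prob J] intro!: sum.cong)
  also have "\<dots> \<le> (\<Sum>x\<in>PiE J (\<lambda>_. UNIV). \<Sum>j\<in>J. \<Sum>T\<in>Pow (J - {j}). ?d x j T)"
    using fin by (intro sum_mono abs_diff_hybrid_event_le) auto
  also have "\<dots> = (\<Sum>j\<in>J. \<Sum>T\<in>Pow (J - {j}). \<Sum>x\<in>PiE J (\<lambda>_. UNIV). ?d x j T)"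
    by (subst sum.swap) (intro sum.cong refl sum.swap)
  also have "\<dots> = (\<Sum>j\<in>J. \<Sum>T\<in>Pow (J - {j}). \<Sum>y\<in>PiE (J - {j}) (\<lambda>_. UNIV).
      \<Sum>\<omega>\<in>UNIV. \<bar>cut_term \<gamma> (hybrid_event n (J - {j}) T y) \<omega> j\<bar>)"
  proof (rule sum.cong[OF refl], rule sum.cong[OF refl])
    fix j T
    assume j: "j \<in> J" and T: "T \<in> Pow (J - {j})"
    have E: "hybrid_event n (J - {j}) T (y(j := \<omega>)) = hybrid_event n (J - {j}) T y" for y \<omega>
      using T unfolding hybrid_event_def by auto
    show "(\<Sum>x\<in>PiE J (\<lambda>_. UNIV). ?d x j T) = (\<Sum>y\<in>PiE (J - {j}) (\<lambda>_. UNIV).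
        \<Sum>\<omega>\<in>UNIV. \<bar>cut_term \<gamma> (hybrid_event n (J - {j}) T y) \<omega> j\<bar>)"
      using sum_PiE_insert[of j "J - {j}" "\<lambda>x. ?d x j T" "\<lambda>_. UNIV"] j by (simp add: insert_absorb E)
  qed
  finally show ?thesis .
qed

lemma sum_tv_marg_le_cut_val:
  assumes \<gamma>: "\<gamma> \<in> couplings n \<mu> (prod_marg n \<mu>)"
  shows "2 * (\<Sum>J\<in>{J. J \<subseteq> {1..n} \<and> card J = Suc m}. tv_marg n \<mu> J)
    \<le> (2 * real (card (UNIV :: 'a set))) ^ Suc m * real n ^ m * cut_val n \<gamma>"
proof -
  let ?F = "\<lambda>R j. \<Sum>T\<in>Pow R. \<Sum>y\<in>PiE R (\<lambda>_. UNIV). \<Sum>\<omega>\<in>UNIV.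
      \<bar>cut_term \<gamma> (hybrid_event n R T y) \<omega> j\<bar>"
  let ?C = "(2 * real (card (UNIV :: 'a set))) ^ Suc m * cut_val n \<gamma>"
  have "n choose m \<le> n ^ m"
    by (cases "m \<le> n") (simp_all add: binomial_le_pow binomial_eq_0)
  then have choose_le: "real (n choose m) \<le> real n ^ m"
    by (metis of_nat_le_iff of_nat_power)
  have "2 * (\<Sum>J\<in>{J. J \<subseteq> {1..n} \<and> card J = Suc m}. tv_marg n \<mu> J)
      = (\<Sum>J\<in>{J. J \<subseteq> {1..n} \<and> card J = Suc m}. 2 * tv_marg n \<mu> J)"
    by (simp add: sum_distrib_left)
  also have "\<dots> \<le> (\<Sum>J\<in>{J. J \<subseteq> {1..n} \<and> card J = Suc m}. \<Sum>j\<in>J. ?F (J - {j}) j)"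
    by (intro sum_mono two_tv_marg_le_hybrid \<gamma>) auto
  also have "\<dots> = (\<Sum>R\<in>{R. R \<subseteq> {1..n} \<and> card R = m}. \<Sum>j\<in>{1..n} - R. ?F R j)"
    by (rule sum_subsets_card_Suc) simp
  also have "\<dots> \<le> (\<Sum>R\<in>{R. R \<subseteq> {1..n} \<and> card R = m}. ?C)"
  proof (rule sum_mono)
    fix R
    assume "R \<in> {R. R \<subseteq> {1..n} \<and> card R = m}"
    then show "(\<Sum>j\<in>{1..n} - R. ?F R j) \<le> ?C"
      using sum_hybrid_cut_terms_le[of R n \<gamma>] by simp
  qed
  also have "\<dots> = real (n choose m) * ?C"
    by (simp add: n_subsets)
  also have "\<dots> \<le> real n ^ m * ?C"
    using choose_le by (intro mult_right_mono) (simp_all add: cut_val_nonneg)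
  also have "\<dots> = (2 * real (card (UNIV :: 'a set))) ^ Suc m * real n ^ m * cut_val n \<gamma>"
    by (simp only: mult_ac)
  finally show ?thesis .
qed

lemma sum_tv_marg_le_cut_dist:
  assumes "0 < n"
  shows "2 * (\<Sum>J\<in>{J. J \<subseteq> {1..n} \<and> card J = Suc m}. tv_marg n \<mu> J)
    \<le> (2 * real (card (UNIV :: 'a set))) ^ Suc m * real n ^ Suc m * cut_dist n \<mu> (prod_marg n \<mu>)"
proof -
  let ?S = "2 * (\<Sum>J\<in>{J. J \<subseteq> {1..n} \<and> card J = Suc m}. tv_marg n \<mu> J)"
  let ?C = "(2 * real (card (UNIV :: 'a set))) ^ Suc m * real n ^ m"
  have C: "0 < ?C"
    using assms by (simp add: finite_UNIV_card_ge_0)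
  have "?S / ?C / real n \<le> cut_dist n \<mu> (prod_marg n \<mu>)"
  proof (rule le_cut_dist)
    show "couplings n \<mu> (prod_marg n \<mu>) \<noteq> {}"
      using prod_coupling_in_couplings[OF prob is_prob_prod_marg[OF prob]] by blast
    show "?S / ?C \<le> cut_val n \<gamma>" if "\<gamma> \<in> couplings n \<mu> (prod_marg n \<mu>)" for \<gamma>
    proof -
      have "?S \<le> ?C * cut_val n \<gamma>"
        using sum_tv_marg_le_cut_val[OF that, of m] .
      then show ?thesis
        using C by (subst pos_divide_le_eq) (simp_all add: mult.commute)
    qed
  qed
  then show ?thesis
    using C assms by (simp add: field_simps)
qed

lemma sum_tv_marg_less_if_cut_dist_less:
  assumes "0 < n" "0 < \<epsilon>" "\<epsilon> < 1" "1 \<le> k"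
    and cut: "cut_dist n \<mu> (prod_marg n \<mu>) < \<epsilon>^4 / (128 * real (card (UNIV :: 'a set)))^(4*k)"
  shows "(\<Sum>J\<in>{J. J \<subseteq> {1..n} \<and> card J = k}. tv_marg n \<mu> J) < \<epsilon> * real n ^ k"
proof -
  let ?q = "real (card (UNIV :: 'a set))"
  let ?D = "(128 * ?q)^(4*k)"
  obtain m where k: "k = Suc m"
    using assms(4) by (cases k) auto
  have "0 < card (UNIV :: 'a set)"
    by (simp add: finite_UNIV_card_ge_0)
  then have q: "1 \<le> ?q"
    by simp
  have "2 * ?q \<le> 128 * ?q"
    using q by simp
  also have "\<dots> \<le> (128 * ?q)^4"
    using q by (intro self_le_power) auto
  finally have "(2 * ?q)^k \<le> ((128 * ?q)^4)^k"
    using q by (intro power_mono) auto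
  then have "(2 * ?q)^k \<le> ?D"
    by (simp only: power_mult)
  moreover have D: "0 < ?D"
    using q by simp
  ultimately have "(2 * ?q)^k * (\<epsilon>^4 / ?D) \<le> ?D * (\<epsilon>^4 / ?D)"
    using assms(2) by (intro mult_right_mono) auto
  also have "\<dots> = \<epsilon>^4"
    using D by simp
  also have "\<dots> \<le> \<epsilon>"
    using assms(2,3) power_decreasing[of 1 4 \<epsilon>] by simp
  finally have small: "(2 * ?q)^k * (\<epsilon>^4 / ?D) \<le> \<epsilon>" .
  have pos: "0 < (2 * ?q)^k * real n ^ k"
    using q assms(1) by simp
  have "2 * (\<Sum>J\<in>{J. J \<subseteq> {1..n} \<and> card J = k}. tv_marg n \<mu> J)
      \<le> (2 * ?q)^k * real n ^ k * cut_dist n \<mu> (prod_marg n \<mu>)"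
    unfolding k by (rule sum_tv_marg_le_cut_dist[OF assms(1)])
  also have "\<dots> < (2 * ?q)^k * real n ^ k * (\<epsilon>^4 / ?D)"
    using cut pos by (rule mult_strict_left_mono)
  also have "\<dots> = (2 * ?q)^k * (\<epsilon>^4 / ?D) * real n ^ k"
    by simp
  also have "\<dots> \<le> \<epsilon> * real n ^ k"
    using small by (rule mult_right_mono) simp
  finally have "2 * (\<Sum>J\<in>{J. J \<subseteq> {1..n} \<and> card J = k}. tv_marg n \<mu> J) < \<epsilon> * real n ^ k" .
  moreover have "0 < \<epsilon> * real n ^ k"
    using assms(1,2) by simp
  ultimately show ?thesis
    by linarith
qed

end

theorem proposition2p5:
  assumes "card (UNIV :: 'a::finite set) \<ge> 2"
  shows "\<forall>\<epsilon>::real. \<forall>k::nat. 0 < \<epsilon> \<and> \<epsilon> < 1/2 \<and> k \<ge> 2 \<longrightarrow>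
    (\<exists>n0::nat. n0 > 0 \<and> (\<forall>n > n0. \<forall>\<mu> :: (nat \<Rightarrow> 'a) \<Rightarrow> real. is_prob n \<mu> \<longrightarrow>
       (eps_symmetric n ((\<epsilon>/9)^3) \<mu> \<longrightarrow> cut_dist n \<mu> (prod_marg n \<mu>) < \<epsilon>) \<and>
       (cut_dist n \<mu> (prod_marg n \<mu>) < \<epsilon>^4 / (128 * real (card (UNIV :: 'a set)))^(4*k) \<longrightarrow>
          (\<Sum>I\<in>{I. I \<subseteq> {1..n} \<and> card I = k}. tv_marg n \<mu> I) < \<epsilon> * (real n)^k)))"
proof (intro allI impI)
  fix \<epsilon> :: real and k :: nat
  assume "0 < \<epsilon> \<and> \<epsilon> < 1/2 \<and> k \<ge> 2"
  then have \<epsilon>: "0 < \<epsilon>" "\<epsilon> < 1/2" and k: "1 \<le> k"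
    by auto
  define n0 where "n0 = nat \<lceil>4 / \<epsilon>\<^sup>2\<rceil> + 1"
  have large: "4 / \<epsilon>\<^sup>2 < real n" if "n > n0" for n
    using that real_nat_ceiling_ge[of "4 / \<epsilon>\<^sup>2"] unfolding n0_def by linarith
  show "\<exists>n0>0. \<forall>n>n0. \<forall>\<mu> :: (nat \<Rightarrow> 'a) \<Rightarrow> real. is_prob n \<mu> \<longrightarrow>
      (eps_symmetric n ((\<epsilon>/9)^3) \<mu> \<longrightarrow> cut_dist n \<mu> (prod_marg n \<mu>) < \<epsilon>) \<and>
      (cut_dist n \<mu> (prod_marg n \<mu>) < \<epsilon>^4 / (128 * real (card (UNIV :: 'a set)))^(4*k) \<longrightarrow>
         (\<Sum>I\<in>{I. I \<subseteq> {1..n} \<and> card I = k}. tv_marg n \<mu> I) < \<epsilon> * (real n)^k)"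
  proof (intro exI[of _ n0] conjI allI impI)
    show "0 < n0"
      by (simp add: n0_def)
    fix n and \<mu> :: "(nat \<Rightarrow> 'a) \<Rightarrow> real"
    assume n: "n > n0" and prob: "is_prob n \<mu>"
    then have "0 < n" and "\<epsilon> < 1"
      using \<epsilon> by simp_all
    show "cut_dist n \<mu> (prod_marg n \<mu>) < \<epsilon>" if "eps_symmetric n ((\<epsilon>/9)^3) \<mu>"
      using symmetric_imp_cut_dist_prod_marg_less[OF prob \<epsilon> large[OF n] that] .
    show "(\<Sum>I\<in>{I. I \<subseteq> {1..n} \<and> card I = k}. tv_marg n \<mu> I) < \<epsilon> * (real n)^k"
      if "cut_dist n \<mu> (prod_marg n \<mu>) < \<epsilon>^4 / (128 * real (card (UNIV :: 'a set)))^(4*k)"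
      using sum_tv_marg_less_if_cut_dist_less[OF prob \<open>0 < n\<close> \<epsilon>(1) \<open>\<epsilon> < 1\<close> k that] .
  qed
qed

end
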